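(* Let $(\mathbf X_i)_{i\in\mathbb N}$ be $\mathbb R^d$-valued random vectors, $\mathcal P=(\mathbf x_1,\dots,\mathbf x_p)$ points of $\mathbb R^d$, and $\mathbf Y_i=(\mathbf 1(\mathbf X_i\le\mathbf x_1),\dots,\mathbf 1(\mathbf X_i\le\mathbf x_p))$. For integers $m\ge1$ and $k\ge m+1$ and $\mathbf x\in\mathbb R^d$ let $$E_m^{\mathbf x}(k)=\max_{j\in\{m,\dots,k-1\}}\frac{j(k-j)}{m^{3/2}}|F_{1:j}(\mathbf x)-F_{j+1:k}(\mathbf x)|,\qquad D_m(k)=\max_{j\in\{m,\dots,k-1\}}\frac{j(k-j)}{m^{3/2}}\|\bar{\mathbf Y}_{1:j}-\bar{\mathbf Y}_{j+1:k}\|_{\Sigma_m^{-1}},$$ where $\Sigma_m$ are $p\times p$ random matrices that are positive definite almost surely for all $m\in\mathbb N$, and $\Sigma_m\to\Sigma$ in probability for some positive-definite matrix $\Sigma$. Let $\eta>0$ and assume that for some $\ell\in\{1,\dots,p\}$, $\sup_{k>m}(m/k)^{\frac32+\eta}E_m^{\mathbf x_\ell}(k)\to\infty$ in probability as $m\to\infty$. Then $\sup_{k>m}(m/k)^{\frac32+\eta}D_m(k)\to\infty$ in probability as $m\to\infty$.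
   Context: Inequalities between vectors are componentwise. For integers $j,k\ge1$, $F_{j:k}(\mathbf x)=\frac1{k-j+1}\sum_{i=j}^k\mathbf 1(\mathbf X_i\le\mathbf x)$ if $j\le k$ and $0$ otherwise; $\bar{\mathbf Y}_{j:k}=\frac1{k-j+1}\sum_{i=j}^k\mathbf Y_i$. For $M$ positive definite, $\|\mathbf y\|_M=\sqrt{(\mathbf y^\top M\mathbf y)/p}$. *)

theory Defs
  imports "HOL-Probability.Probability"
begin

definition vle :: "real^'d \<Rightarrow> real^'d \<Rightarrow> bool" where
  "vle x y \<longleftrightarrow> (\<forall>i. x $ i \<le> y $ i)"

definition Femp :: "(nat \<Rightarrow> 'a \<Rightarrow> real^'d) \<Rightarrow> nat \<Rightarrow> nat \<Rightarrow> real^'d \<Rightarrow> 'a \<Rightarrow> real" where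
  "Femp X j k x w = (if j \<le> k then
      (1 / real (k - j + 1)) * (\<Sum>i=j..k. (if vle (X i w) x then 1 else 0)) else 0)"

definition Yvec :: "(nat \<Rightarrow> 'a \<Rightarrow> real^'d) \<Rightarrow> ('p \<Rightarrow> real^'d) \<Rightarrow> nat \<Rightarrow> 'a \<Rightarrow> real^'p" where
  "Yvec X P i w = (\<chi> l. if vle (X i w) (P l) then 1 else 0)"

definition Ybar :: "(nat \<Rightarrow> 'a \<Rightarrow> real^'d) \<Rightarrow> ('p \<Rightarrow> real^'d) \<Rightarrow> nat \<Rightarrow> nat \<Rightarrow> 'a \<Rightarrow> real^'p" where
  "Ybar X P j k w = (if j \<le> k then
      (1 / real (k - j + 1)) *\<^sub>R (\<Sum>i=j..k. Yvec X P i w) else 0)"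

definition Mnorm :: "real^'p^'p \<Rightarrow> real^'p \<Rightarrow> real" where
  "Mnorm M y = sqrt ((y \<bullet> (M *v y)) / real CARD('p))"

definition pos_def :: "real^'p^'p \<Rightarrow> bool" where
  "pos_def A \<longleftrightarrow> transpose A = A \<and> (\<forall>y. y \<noteq> 0 \<longrightarrow> y \<bullet> (A *v y) > 0)"

definition Estat :: "(nat \<Rightarrow> 'a \<Rightarrow> real^'d) \<Rightarrow> real^'d \<Rightarrow> nat \<Rightarrow> nat \<Rightarrow> 'a \<Rightarrow> real" where
  "Estat X x m k w = Max ((\<lambda>j. real j * real (k - j) / real m powr (3/2) *
      \<bar>Femp X 1 j x w - Femp X (j+1) k x w\<bar>) ` {m..k-1})"

definition Dstat :: "(nat \<Rightarrow> 'a \<Rightarrow> real^'d) \<Rightarrow> ('p \<Rightarrow> real^'d) \<Rightarrow> (nat \<Rightarrow> 'a \<Rightarrow> real^'p^'p)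
     \<Rightarrow> nat \<Rightarrow> nat \<Rightarrow> 'a \<Rightarrow> real" where
  "Dstat X P Sig m k w = Max ((\<lambda>j. real j * real (k - j) / real m powr (3/2) *
      Mnorm (matrix_inv (Sig m w)) (Ybar X P 1 j w - Ybar X P (j+1) k w)) ` {m..k-1})"

definition to_infty_in_prob :: "'a measure \<Rightarrow> (nat \<Rightarrow> 'a \<Rightarrow> ereal) \<Rightarrow> bool" where
  "to_infty_in_prob M S \<longleftrightarrow>
     (\<forall>K::real. (\<lambda>m. measure M {w \<in> space M. ereal K < S m w}) \<longlonglongrightarrow> 1)"

end

theory Submission
  imports Defs
begin

text \<open>For positive definite \<open>\<Sigma>\<close> one has \<open>|y|\<^sup>2 \<le> \<parallel>\<Sigma>\<parallel> y\<^sup>T \<Sigma>\<^sup>-\<^sup>1 y\<close>, so every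
  coordinate of \<open>y\<close> is at most \<open>sqrt (p \<parallel>\<Sigma>\<parallel>)\<close> times \<open>\<parallel>y\<parallel>\<^bsub>\<Sigma>\<^sup>-\<^sup>1\<^esub>\<close>. The \<open>\<ell>\<close>-th
  coordinate of \<open>Y\<^sub>1\<^sub>:\<^sub>j - Y\<^sub>j\<^sub>+\<^sub>1\<^sub>:\<^sub>k\<close> is \<open>F\<^sub>1\<^sub>:\<^sub>j(x\<^sub>\<ell>) - F\<^sub>j\<^sub>+\<^sub>1\<^sub>:\<^sub>k(x\<^sub>\<ell>)\<close>, hence
  \<open>E\<^sub>m\<^sup>x\<^sup>\<ell>(k) \<le> sqrt (p B) D\<^sub>m(k)\<close> whenever \<open>\<parallel>\<Sigma>\<^sub>m\<parallel> \<le> B\<close>. Since \<open>\<parallel>\<Sigma>\<^sub>m\<parallel> \<le> \<parallel>\<Sigma>\<parallel> + 1\<close>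
  with probability tending to one, divergence in probability transfers from \<open>E\<close> to \<open>D\<close>.\<close>

lemma matrix_inv_right:
  fixes A :: "real^'n^'n"
  assumes "invertible A"
  shows "A ** matrix_inv A = mat 1"
  using assms unfolding invertible_def matrix_inv_def by (rule someI2_ex) auto

lemma matrix_inv_singular:
  fixes A :: "real^'n^'n"
  assumes "det A = 0"
  shows "matrix_inv A = (SOME A'. False)"
proof -
  have "\<not> invertible A" using assms by (simp add: invertible_det_nz)
  then have "(\<lambda>A'. A ** A' = mat 1 \<and> A' ** A = mat 1) = (\<lambda>_. False)"
    unfolding invertible_def by auto
  then show ?thesis unfolding matrix_inv_def by (rule arg_cong)
qed

lemma matrix_inv_mult_vec_nth_cramer:
  fixes A :: "real^'n^'n"
  assumes "det A \<noteq> 0"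
  shows "(matrix_inv A *v b) $ k = det (\<chi> i j. if j = k then b $ i else A $ i $ j) / det A"
proof -
  have "A *v (matrix_inv A *v b) = b"
    using matrix_inv_right[of A] assms by (simp add: invertible_det_nz matrix_vector_mul_assoc)
  then show ?thesis using cramer[OF assms] by simp
qed

lemma pos_def_invertible:
  fixes A :: "real^'n^'n"
  assumes "pos_def A"
  shows "invertible A"
proof -
  have "inj ((*v) A)"
  proof (rule injI)
    fix x y assume "A *v x = A *v y"
    then have "(x - y) \<bullet> (A *v (x - y)) = 0" by (simp add: matrix_vector_mult_diff_distrib)
    then show "x = y" using assms unfolding pos_def_def by (metis less_irrefl right_minus_eq)
  qed
  then show ?thesis
    using matrix_left_invertible_injective invertible_left_inverse by blast
qed

lemma inner_matrix_vector_mult_symmetric: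
  fixes A :: "real^'n^'n"
  assumes "transpose A = A"
  shows "u \<bullet> (A *v v) = (A *v u) \<bullet> v"
  by (metis assms dot_lmul_matrix transpose_matrix_vector)

lemma norm_matrix_vector_mult_le:
  fixes A :: "real^'n^'m"
  shows "norm (A *v x) \<le> norm A * norm x"
proof -
  have "norm (A *v x) \<le> norm (\<chi> i. norm (A $ i) * norm x)"
  proof (rule norm_le_componentwise_cart)
    fix i
    have "norm ((A *v x) $ i) = \<bar>A $ i \<bullet> x\<bar>"
      by (simp add: matrix_vector_mult_def inner_vec_def)
    also have "\<dots> \<le> norm (A $ i) * norm x" by (rule Cauchy_Schwarz_ineq2)
    finally show "norm ((A *v x) $ i) \<le> norm ((\<chi> i. norm (A $ i) * norm x) $ i)" by simp
  qed
  also have "\<dots> = norm A * norm x"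
    by (simp add: norm_vec_def L2_set_left_distrib)
  finally show ?thesis .
qed

lemma pos_def_inner_le_inverse_form:
  fixes A :: "real^'n^'n"
  assumes pd: "pos_def A" and "norm A \<le> B"
  shows "y \<bullet> y \<le> B * (y \<bullet> (matrix_inv A *v y))"
proof (cases "y = 0")
  case False
  define z where "z = matrix_inv A *v y"
  have sym: "transpose A = A" and pos: "\<And>x. x \<noteq> 0 \<Longrightarrow> 0 < x \<bullet> (A *v x)"
    using pd unfolding pos_def_def by auto
  have Az: "A *v z = y"
    using matrix_inv_right[OF pos_def_invertible[OF pd]]
    by (simp add: z_def matrix_vector_mul_assoc)
  have yAy: "y \<bullet> (A *v y) \<le> B * (y \<bullet> y)"
  proof -
    have "y \<bullet> (A *v y) \<le> norm y * norm (A *v y)" by (rule norm_cauchy_schwarz)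
    also have "\<dots> \<le> norm y * (B * norm y)"
      using order_trans[OF norm_matrix_vector_mult_le mult_right_mono[OF assms(2) norm_ge_zero]]
      by (rule mult_left_mono) simp
    finally show ?thesis by (simp add: power2_norm_eq_inner[symmetric] power2_eq_square mult_ac)
  qed
  have B0: "0 < B"
    using pos[OF False] yAy order_trans[OF norm_ge_zero assms(2)] by (cases "B = 0") auto
  \<comment> \<open>Expand \<open>0 \<le> (z - t y) \<bullet> A (z - t y)\<close> at \<open>t = 1/B\<close>, using \<open>A z = y\<close> and the symmetry of \<open>A\<close>.\<close>
  define t where "t = 1 / B"
  have "0 \<le> (z - t *\<^sub>R y) \<bullet> (A *v (z - t *\<^sub>R y))"
    using pos[of "z - t *\<^sub>R y"] by fastforce
  also have "\<dots> = y \<bullet> z - 2 * t * (y \<bullet> y) + t^2 * (y \<bullet> (A *v y))"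
    using inner_matrix_vector_mult_symmetric[OF sym, of z y]
    by (simp add: Az matrix_vector_mult_diff_distrib matrix_vector_mult_scaleR inner_diff_left
        inner_diff_right inner_commute power2_eq_square algebra_simps)
  also have "\<dots> \<le> y \<bullet> z - 2 * t * (y \<bullet> y) + t^2 * (B * (y \<bullet> y))"
    using yAy by (simp add: mult_left_mono)
  also have "\<dots> = y \<bullet> z - (y \<bullet> y) / B"
    using B0 by (simp add: t_def field_simps power2_eq_square)
  finally show ?thesis using B0 by (simp add: z_def field_simps)
qed simp

lemma pos_def_component_le_Mnorm_inverse:
  fixes A :: "real^'n^'n"
  assumes "pos_def A" and "norm A \<le> B"
  shows "\<bar>y $ l\<bar> \<le> sqrt (real CARD('n) * B) * Mnorm (matrix_inv A) y"
proof -
  define q where "q = y \<bullet> (matrix_inv A *v y)"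
  have "\<bar>y $ l\<bar>^2 \<le> norm y ^ 2"
    by (rule power_mono[OF component_le_norm_cart abs_ge_zero])
  also have "\<dots> \<le> B * q"
    unfolding q_def power2_norm_eq_inner by (rule pos_def_inner_le_inverse_form[OF assms])
  finally have "\<bar>y $ l\<bar> \<le> sqrt (B * q)" by (rule real_le_rsqrt)
  also have "\<dots> = sqrt (real CARD('n) * B) * sqrt (q / real CARD('n))"
    by (simp add: real_sqrt_mult[symmetric])
  finally show ?thesis by (simp add: Mnorm_def q_def)
qed

lemma Ybar_nth: "Ybar X P j k w $ l = Femp X j k (P l) w"
  unfolding Ybar_def Femp_def Yvec_def by simp

lemma Estat_le_Dstat:
  fixes Sig :: "nat \<Rightarrow> 'a \<Rightarrow> real^'p^'p" and P :: "'p \<Rightarrow> real^'d"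
  assumes "pos_def (Sig m w)" and "norm (Sig m w) \<le> B" and "m < k"
  shows "Estat X (P l) m k w \<le> sqrt (real CARD('p) * B) * Dstat X P Sig m k w"
proof -
  define c where "c = sqrt (real CARD('p) * B)"
  define weight where "weight j = real j * real (k - j) / real m powr (3/2)" for j
  define d where "d j = weight j * Mnorm (matrix_inv (Sig m w)) (Ybar X P 1 j w - Ybar X P (j+1) k w)" for j
  have c0: "0 \<le> c" using order_trans[OF norm_ge_zero assms(2)] by (simp add: c_def)
  have fin: "finite {m..k-1}" and ne: "{m..k-1} \<noteq> {}" using assms(3) by auto
  have "weight j * \<bar>Femp X 1 j (P l) w - Femp X (j+1) k (P l) w\<bar> \<le> c * Max (d ` {m..k-1})"
    if "j \<in> {m..k-1}" for j
  proof -
    have "\<bar>Femp X 1 j (P l) w - Femp X (j+1) k (P l) w\<bar>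
        \<le> c * Mnorm (matrix_inv (Sig m w)) (Ybar X P 1 j w - Ybar X P (j+1) k w)"
      using pos_def_component_le_Mnorm_inverse[OF assms(1,2), of "Ybar X P 1 j w - Ybar X P (j+1) k w" l]
      by (simp add: c_def Ybar_nth)
    then have "weight j * \<bar>Femp X 1 j (P l) w - Femp X (j+1) k (P l) w\<bar>
        \<le> weight j * (c * Mnorm (matrix_inv (Sig m w)) (Ybar X P 1 j w - Ybar X P (j+1) k w))"
      by (rule mult_left_mono) (simp add: weight_def)
    also have "\<dots> = c * d j" by (simp add: d_def)
    also have "c * d j \<le> c * Max (d ` {m..k-1})"
      using fin that c0 by (intro mult_left_mono) auto
    finally show ?thesis .
  qed
  then show ?thesis
    unfolding Estat_def Dstat_def weight_def[symmetric] d_def[symmetric] c_def[symmetric]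
    using fin ne by (simp add: Max_le_iff)
qed

lemma SUP_weighted_Estat_le_Dstat:
  fixes Sig :: "nat \<Rightarrow> 'a \<Rightarrow> real^'p^'p" and P :: "'p \<Rightarrow> real^'d"
  assumes "pos_def (Sig m w)" and "norm (Sig m w) \<le> B" and "\<And>k. 0 \<le> r k"
  shows "(SUP k\<in>{m<..}. ereal (r k * Estat X (P l) m k w))
    \<le> ereal (sqrt (real CARD('p) * B)) * (SUP k\<in>{m<..}. ereal (r k * Dstat X P Sig m k w))"
proof -
  define c where "c = sqrt (real CARD('p) * B)"
  have c0: "0 \<le> c" using order_trans[OF norm_ge_zero assms(2)] by (simp add: c_def)
  have "ereal (r k * Estat X (P l) m k w) \<le> ereal c * ereal (r k * Dstat X P Sig m k w)"
    if "k \<in> {m<..}" for k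
  proof -
    have "r k * Estat X (P l) m k w \<le> r k * (c * Dstat X P Sig m k w)"
      using Estat_le_Dstat[where Sig=Sig and m=m and w=w, OF assms(1,2)] that assms(3)
      by (intro mult_left_mono) (auto simp: c_def)
    also have "\<dots> = c * (r k * Dstat X P Sig m k w)" by (rule mult.left_commute)
    finally show ?thesis by simp
  qed
  then have "(SUP k\<in>{m<..}. ereal (r k * Estat X (P l) m k w))
      \<le> (SUP k\<in>{m<..}. ereal c * ereal (r k * Dstat X P Sig m k w))"
    by (rule SUP_subset_mono[OF order_refl])
  also have "\<dots> = ereal c * (SUP k\<in>{m<..}. ereal (r k * Dstat X P Sig m k w))"
    by (rule Sup_ereal_mult_left'[symmetric]) (use c0 in auto)
  finally show ?thesis unfolding c_def .
qed

lemma borel_measurable_vec_nth[measurable (raw)]: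
  fixes f :: "'a \<Rightarrow> 'b::real_normed_vector^'n"
  assumes "f \<in> borel_measurable M"
  shows "(\<lambda>x. f x $ i) \<in> borel_measurable M"
  using measurable_compose[OF assms borel_measurable_continuous_onI[OF
        linear_continuous_on[OF bounded_linear_vec_nth]]]
  by (simp add: o_def)

lemma borel_measurable_det:
  fixes F :: "'a \<Rightarrow> real^'n^'n"
  assumes [measurable]: "\<And>i j. (\<lambda>w. F w $ i $ j) \<in> borel_measurable M"
  shows "(\<lambda>w. det (F w)) \<in> borel_measurable M"
  unfolding det_def by measurable

lemma borel_measurable_Mnorm_matrix_inv:
  fixes S :: "'a \<Rightarrow> real^'n^'n" and v :: "'a \<Rightarrow> real^'n"
  assumes [measurable]: "\<And>i j. (\<lambda>w. S w $ i $ j) \<in> borel_measurable M"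
    and [measurable]: "\<And>i. (\<lambda>w. v w $ i) \<in> borel_measurable M"
  shows "(\<lambda>w. Mnorm (matrix_inv (S w)) (v w)) \<in> borel_measurable M"
proof -
  define C :: "real^'n^'n" where "C = (SOME A'. False)"
  have [measurable]: "(\<lambda>w. det (S w)) \<in> borel_measurable M"
    by (rule borel_measurable_det) simp
  have [measurable]: "(\<lambda>w. det (\<chi> i j. if j = k then v w $ i else S w $ i $ j)) \<in> borel_measurable M"
    for k by (rule borel_measurable_det) simp
  have "(matrix_inv (S w) *v v w) $ k = (if det (S w) = 0 then \<Sum>j\<in>UNIV. C $ k $ j * v w $ j
      else det (\<chi> i j. if j = k then v w $ i else S w $ i $ j) / det (S w))" for w k
    by (cases "det (S w) = 0")
      (simp add: matrix_inv_singular C_def matrix_vector_mult_def,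
       simp add: matrix_inv_mult_vec_nth_cramer)
  then have [measurable]: "(\<lambda>w. (matrix_inv (S w) *v v w) $ k) \<in> borel_measurable M" for k
    by simp
  show ?thesis unfolding Mnorm_def inner_vec_def by measurable
qed

lemma pred_vle[measurable]:
  assumes [measurable]: "X \<in> borel_measurable M"
  shows "Measurable.pred M (\<lambda>w. vle (X w) x)"
  unfolding vle_def by measurable

lemma borel_measurable_Femp[measurable]:
  assumes [measurable]: "\<And>i. X i \<in> borel_measurable M"
  shows "(\<lambda>w. Femp X j k x w) \<in> borel_measurable M"
  unfolding Femp_def by measurable

lemma borel_measurable_Dstat[measurable]:
  assumes [measurable]: "\<And>i. X i \<in> borel_measurable M" "\<And>m. Sig m \<in> borel_measurable M"
  shows "(\<lambda>w. Dstat X P Sig m k w) \<in> borel_measurable M"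
proof -
  have [measurable]: "(\<lambda>w. Mnorm (matrix_inv (Sig m w)) (Ybar X P a b w - Ybar X P a' b' w))
      \<in> borel_measurable M" for a b a' b'
    by (rule borel_measurable_Mnorm_matrix_inv) (simp_all add: Ybar_nth)
  show ?thesis unfolding Dstat_def by measurable
qed

lemma (in prob_space) to_infty_in_prob_dominating:
  assumes S: "to_infty_in_prob M S"
    and [measurable]: "\<And>m. T m \<in> borel_measurable M"
    and N: "\<And>m. N m \<in> events" "(\<lambda>m. prob (N m)) \<longlonglongrightarrow> 0"
    and c: "0 < c"
    and dom: "\<And>m. AE w in M. w \<notin> N m \<longrightarrow> S m w \<le> ereal c * T m w"
  shows "to_infty_in_prob M T"
  unfolding to_infty_in_prob_def
proof
  fix K :: real
  define E where "E m = {w \<in> space M. ereal (c * K) < S m w}" for m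
  define D where "D m = {w \<in> space M. ereal K < T m w}" for m
  have D_events: "D m \<in> events" for m unfolding D_def by measurable
  have lower: "prob (E m) - prob (N m) \<le> prob (D m)" for m
  proof -
    have "AE w in M. w \<in> E m \<longrightarrow> w \<in> D m \<union> N m"
      using dom[of m]
    proof eventually_elim
      case (elim w)
      have "ereal K < T m w" if "ereal (c * K) < S m w" "S m w \<le> ereal c * T m w"
      proof (rule ccontr)
        assume "\<not> ereal K < T m w"
        then have "ereal c * T m w \<le> ereal c * ereal K"
          using c by (intro ereal_mult_left_mono) auto
        with that show False by simp
      qed
      with elim show ?case unfolding E_def D_def by blast
    qed
    then have "prob (E m) \<le> prob (D m \<union> N m)"
      using D_events N(1) by (intro finite_measure_mono_AE) auto
    also have "\<dots> \<le> prob (D m) + prob (N m)"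
      using D_events N(1) by (intro measure_subadditive) auto
    finally show ?thesis by simp
  qed
  have "(\<lambda>m. prob (E m)) \<longlonglongrightarrow> 1"
    using S unfolding to_infty_in_prob_def E_def by blast
  from tendsto_diff[OF this N(2)] have "(\<lambda>m. prob (E m) - prob (N m)) \<longlonglongrightarrow> 1"
    by simp
  then show "(\<lambda>m. prob (D m)) \<longlonglongrightarrow> 1"
    by (rule tendsto_sandwich[rotated 2, OF _ tendsto_const])
      (simp_all add: always_eventually lower prob_le_1)
qed

theorem proposition2p4:
  fixes M :: "'a measure"
    and X :: "nat \<Rightarrow> 'a \<Rightarrow> real^('d::finite)"
    and P :: "('p::finite) \<Rightarrow> real^'d"
    and Sig :: "nat \<Rightarrow> 'a \<Rightarrow> real^'p^'p"
    and Sig0 :: "real^'p^'p"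
    and \<eta> :: real
    and l :: 'p
  assumes "prob_space M"
    and "\<And>i. X i \<in> borel_measurable M"
    and "\<And>m. Sig m \<in> borel_measurable M"
    and "\<And>m. AE w in M. pos_def (Sig m w)"
    and "pos_def Sig0"
    and "\<And>\<epsilon>. \<epsilon> > 0 \<Longrightarrow>
           (\<lambda>m. measure M {w \<in> space M. norm (Sig m w - Sig0) > \<epsilon>}) \<longlonglongrightarrow> 0"
    and "\<eta> > 0"
    and "to_infty_in_prob M (\<lambda>m w. SUP k\<in>{m<..}.
           ereal ((real m / real k) powr (3/2 + \<eta>) * Estat X (P l) m k w))"
  shows "to_infty_in_prob M (\<lambda>m w. SUP k\<in>{m<..}.
           ereal ((real m / real k) powr (3/2 + \<eta>) * Dstat X P Sig m k w))"
proof -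
  interpret prob_space M by fact
  note [measurable] = assms(2,3)
  define B where "B = norm Sig0 + 1"
  define c where "c = sqrt (real CARD('p) * B)"
  define r where "r m k = (real m / real k) powr (3/2 + \<eta>)" for m k :: nat
  define SE where "SE = (\<lambda>m w. SUP k\<in>{m<..}. ereal (r m k * Estat X (P l) m k w))"
  define SD where "SD = (\<lambda>m w. SUP k\<in>{m<..}. ereal (r m k * Dstat X P Sig m k w))"
  define N where "N m = {w \<in> space M. 1 < norm (Sig m w - Sig0)}" for m
  have "to_infty_in_prob M SE" using assms(8) unfolding SE_def r_def .
  moreover have "SD m \<in> borel_measurable M" for m unfolding SD_def by measurable
  moreover have "N m \<in> events" for m unfolding N_def by measurable
  moreover have "(\<lambda>m. prob (N m)) \<longlonglongrightarrow> 0" unfolding N_def using assms(6) by simp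
  moreover have "0 < c" by (simp add: c_def B_def add_nonneg_pos)
  moreover have "AE w in M. w \<notin> N m \<longrightarrow> SE m w \<le> ereal c * SD m w" for m
    using assms(4)[of m] AE_space
  proof eventually_elim
    case (elim w)
    show ?case
    proof
      assume "w \<notin> N m"
      with elim(2) have "norm (Sig m w - Sig0) \<le> 1" by (simp add: N_def)
      then have "norm (Sig m w) \<le> B"
        using norm_triangle_sub[of "Sig m w" Sig0] unfolding B_def by linarith
      then show "SE m w \<le> ereal c * SD m w"
        unfolding SE_def SD_def c_def
        by (rule SUP_weighted_Estat_le_Dstat[where Sig=Sig and m=m and w=w, OF elim(1)])
          (simp add: r_def)
    qed
  qed
  ultimately have "to_infty_in_prob M SD" by (rule to_infty_in_prob_dominating)
  then show ?thesis unfolding SD_def r_def .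
qed

end
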